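(* Let $d\ge1$ and let $x_1,\dots,x_t$ be positive integers such that no value occurs more than $d$ times among them. Then $\prod_{i=1}^t x_i\ge\big(\frac{t}{ed}\big)^t$. *)

theory Defs
  imports Complex_Main
begin

end

theory Submission
  imports Defs
begin

text \<open>If every value occurs at most \<open>d\<close> times among the positive integers \<open>x\<^sub>i\<close>, \<open>i \<in> S\<close>,
  then the largest of them is at least \<open>|S| / d\<close>. Removing it and inducting gives
  \<open>|S|! \<le> d\<^bsup>|S|\<^esup> \<Prod> x\<^sub>i\<close>, and the claim follows from \<open>(t/e)\<^sup>t \<le> t!\<close>, which is one term of
  the exponential series for \<open>e\<^sup>t\<close>.\<close>

lemma power_div_fact_le_exp:
  fixes x :: real
  assumes "0 \<le> x"
  shows "x ^ n / fact n \<le> exp x"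
proof -
  have "(\<Sum>k\<in>{n}. x ^ k /\<^sub>R fact k) \<le> (\<Sum>k. x ^ k /\<^sub>R fact k)"
    using assms summable_exp[of x] by (intro sum_le_suminf) auto
  then show ?thesis
    by (simp add: exp_def divide_inverse mult.commute)
qed

lemma power_div_exp_le_fact: "(real n / exp 1) ^ n \<le> fact n"
proof -
  have "real n ^ n / fact n \<le> exp 1 ^ n"
    using power_div_fact_le_exp[of "real n" n] exp_of_nat_mult[of n "1::real"] by simp
  then show ?thesis
    by (simp add: power_divide field_simps)
qed

lemma card_le_mult_Max_image:
  fixes x :: "'a \<Rightarrow> nat"
  assumes "finite S"
    and "\<forall>i\<in>S. x i > 0"
    and "\<forall>v. card {i\<in>S. x i = v} \<le> d"
  shows "card S \<le> d * Max (x ` S)"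
proof -
  let ?m = "Max (x ` S)"
  have "S \<subseteq> (\<Union>v\<in>{1..?m}. {i\<in>S. x i = v})"
    using assms(1,2) by fastforce
  then have "card S \<le> card (\<Union>v\<in>{1..?m}. {i\<in>S. x i = v})"
    using assms(1) by (intro card_mono) auto
  also have "\<dots> \<le> (\<Sum>v\<in>{1..?m}. card {i\<in>S. x i = v})"
    by (rule card_UN_le) simp
  also have "\<dots> \<le> (\<Sum>v\<in>{1..?m}. d)"
    using assms(3) by (intro sum_mono) blast
  finally show ?thesis
    by (simp add: mult.commute)
qed

lemma fact_card_le_power_mult_prod:
  fixes x :: "'a \<Rightarrow> nat"
  assumes "finite S"
    and "\<forall>i\<in>S. x i > 0"
    and "\<forall>v. card {i\<in>S. x i = v} \<le> d"
  shows "fact (card S) \<le> d ^ card S * (\<Prod>i\<in>S. x i)"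
  using assms(1)
proof (induction S rule: finite_remove_induct)
  case empty
  then show ?case by simp
next
  case (remove A)
  define n where "n = card A - 1"
  have "Max (x ` A) \<in> x ` A"
    using remove.hyps(1,2) by (intro Max_in) auto
  then obtain j where j: "j \<in> A" "x j = Max (x ` A)"
    by (metis imageE)
  have "card {i\<in>A. x i = v} \<le> card {i\<in>S. x i = v}" for v
    using assms(1) remove.hyps(3) by (intro card_mono) auto
  then have "card {i\<in>A. x i = v} \<le> d" for v
    using assms(3) order_trans by blast
  then have "card A \<le> d * x j"
    using card_le_mult_Max_image[of A x d] remove.hyps(1,3) assms(2) j(2) by auto
  moreover have card_A: "card A = Suc n" "card (A - {j}) = n"
    using remove.hyps(1,2) j(1) by (auto simp: n_def card_gt_0_iff)
  ultimately have "fact (card A) \<le> d * x j * fact n"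
    by (metis fact_Suc mult_right_mono of_nat_id zero_le)
  also have "\<dots> \<le> d * x j * (d ^ n * (\<Prod>i\<in>A - {j}. x i))"
    using remove.IH[OF j(1)] card_A(2) by simp
  also have "\<dots> = d ^ card A * (\<Prod>i\<in>A. x i)"
    using remove.hyps(1) j(1) card_A(1) by (simp add: prod.remove)
  finally show ?case .
qed

theorem proposition7p2:
  fixes x :: "nat \<Rightarrow> nat" and t d :: nat
  assumes "d \<ge> 1"
    and "\<forall>i\<in>{1..t}. x i > 0"
    and "\<forall>v. card {i\<in>{1..t}. x i = v} \<le> d"
  shows "(\<Prod>i=1..t. real (x i)) \<ge> (real t / (exp 1 * real d)) ^ t"
proof -
  have "fact t \<le> d ^ t * (\<Prod>i=1..t. x i)"
    using fact_card_le_power_mult_prod[OF _ assms(2,3)] by simp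
  then have "fact t \<le> real d ^ t * (\<Prod>i=1..t. real (x i))"
    by (metis of_nat_fact of_nat_le_iff of_nat_mult of_nat_power of_nat_prod)
  then have "(real t / exp 1) ^ t \<le> real d ^ t * (\<Prod>i=1..t. real (x i))"
    using power_div_exp_le_fact order_trans by blast
  moreover have "(real t / (exp 1 * real d)) ^ t = (real t / exp 1) ^ t / real d ^ t"
    by (simp add: power_divide power_mult_distrib)
  ultimately show ?thesis
    using assms(1) by (simp add: divide_le_eq mult.commute)
qed

end
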